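(* Let $s\ge r\ge 2$, let $Q$ be an $s$-vertex $r$-graph and let $H$ be an $n$-vertex $r$-graph ($n\ge s$) with $\mathcal N(Q,H)>0$. Then the function $$f_{Q,H}(p)=\left(\frac{\lambda^{(p)}(Q,H)}{s!\,\mathcal N(Q,H)}\right)^{p}$$ is non-increasing on $[1,\infty)$.
   Context: An $r$-graph ($r\ge 2$) is a finite hypergraph all of whose edges have exactly $r$ vertices. For $I\subseteq V(H)$, $H[I]$ denotes the induced subhypergraph on $I$. For an $s$-vertex $r$-graph $Q$ and an $r$-graph $H$, $\mathcal N(Q,H)$ is the number of (not necessarily induced) subgraphs of $H$ isomorphic to $Q$. For an $n$-vertex $r$-graph $H$ with vertex set $[n]$ and $\mathbf x\in\mathbb R^n$, $P_{Q,H}(\mathbf x)=s!\sum_{\{i_1,\dots,i_s\}\in\binom{[n]}{s}}\mathcal N(Q,H[\{i_1,\dots,i_s\}])\,x_{i_1}\cdots x_{i_s}$, and for $p\ge1$, $\lambda^{(p)}(Q,H)=\max_{\|\mathbf x\|_p=1}P_{Q,H}(\mathbf x)$. *)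

theory Defs
  imports "HOL-Analysis.Analysis"
begin

definition is_rgraph :: "nat \<Rightarrow> nat set \<Rightarrow> nat set set \<Rightarrow> bool" where
  "is_rgraph r V E \<longleftrightarrow> finite V \<and> (\<forall>e\<in>E. e \<subseteq> V \<and> card e = r)"

definition num_copies :: "nat set \<Rightarrow> nat set set \<Rightarrow> nat set \<Rightarrow> nat set set \<Rightarrow> nat" where
  "num_copies VQ EQ0 VH EH = card {(V', E'). V' \<subseteq> VH \<and> E' \<subseteq> EH \<and> (\<forall>e\<in>E'. e \<subseteq> V') \<and>
       (\<exists>f. bij_betw f V' VQ \<and> (image f) ` E' = EQ0)}"

definition induced_edges :: "nat set set \<Rightarrow> nat set \<Rightarrow> nat set set" where
  "induced_edges EH I = {e \<in> EH. e \<subseteq> I}"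

definition PQH :: "nat \<Rightarrow> nat set set \<Rightarrow> nat \<Rightarrow> nat set set \<Rightarrow> (nat \<Rightarrow> real) \<Rightarrow> real" where
  "PQH s EQ0 n EH x = fact s * (\<Sum>I \<in> {I. I \<subseteq> {0..<n} \<and> card I = s}.
      real (num_copies {0..<s} EQ0 I (induced_edges EH I)) * (\<Prod>i\<in>I. x i))"

definition pnorm :: "real \<Rightarrow> nat \<Rightarrow> (nat \<Rightarrow> real) \<Rightarrow> real" where
  "pnorm p n x = (\<Sum>i<n. \<bar>x i\<bar> powr p) powr (1 / p)"

text \<open>lambda^(p)(Q,H) = max over ||x||_p = 1 of P_{Q,H}(x) (the max is attained; Sup).\<close>
definition lambda_p :: "real \<Rightarrow> nat \<Rightarrow> nat set set \<Rightarrow> nat \<Rightarrow> nat set set \<Rightarrow> real" where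
  "lambda_p p s EQ0 n EH = (SUP x \<in> {x :: nat \<Rightarrow> real. pnorm p n x = 1}. PQH s EQ0 n EH x)"

end

theory Submission
  imports Defs
begin

(* Write C = s! N(Q,H) and t = q/p \<ge> 1. Since every copy of Q in H spans exactly one s-set I,
   N(Q,H) = \<Sum>_I N(Q,H[I]), so P_{Q,H}(x)/C is an average of the monomials \<Prod>_{i\<in>I} x_i.
   For a unit q-norm vector y the vector |y|^t has unit p-norm, and Jensen's inequality for
   u \<mapsto> u^t gives (P(y)/C)^t \<le> P(|y|^t)/C \<le> \<lambda>^(p)/C; hence (\<lambda>^(q)/C)^(q/p) \<le> \<lambda>^(p)/C,
   and raising to the power p gives the claim. *)

lemma convex_on_powr_nonneg:
  fixes p :: real
  assumes "1 \<le> p"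
  shows "convex_on {0..} (\<lambda>x. x powr p)"
proof (rule convex_on_linorderI)
  fix t x y :: real
  assume t: "0 < t" "t < 1" and xy: "x \<in> {0..}" "y \<in> {0..}" "x < y"
  show "((1 - t) *\<^sub>R x + t *\<^sub>R y) powr p \<le> (1 - t) * x powr p + t * y powr p"
  proof (cases "x = 0")
    case True
    have "(t * y) powr p = t powr p * y powr p"
      by (rule powr_mult)
    also have "\<dots> \<le> t * y powr p"
      using t assms by (intro mult_right_mono powr_le_one_le) auto
    finally show ?thesis
      using True assms by simp
  next
    case False
    then show ?thesis
      using convex_onD[OF powr_convex[OF assms], of t x y] t xy by simp
  qed
qed simp

definition copies :: "nat set \<Rightarrow> nat set set \<Rightarrow> nat set \<Rightarrow> nat set set \<Rightarrow> (nat set \<times> nat set set) set"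
  where "copies VQ EQ0 VH EH = {(V', E'). V' \<subseteq> VH \<and> E' \<subseteq> EH \<and> (\<forall>e\<in>E'. e \<subseteq> V') \<and>
           (\<exists>f. bij_betw f V' VQ \<and> (image f) ` E' = EQ0)}"

lemma num_copies_eq_card_copies: "num_copies VQ EQ0 VH EH = card (copies VQ EQ0 VH EH)"
  by (simp add: num_copies_def copies_def)

lemma finite_copies:
  assumes "finite VH"
  shows "finite (copies VQ EQ0 VH EH)"
proof (rule finite_subset)
  show "copies VQ EQ0 VH EH \<subseteq> Pow VH \<times> Pow (Pow VH)"
    unfolding copies_def by auto
qed (use assms in simp)

lemma card_vertices_of_copy:
  assumes "(V', E') \<in> copies VQ EQ0 VH EH"
  shows "card V' = card VQ"
  using assms bij_betw_same_card unfolding copies_def by blast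

lemma copies_eq_UN_copies_induced:
  "copies VQ EQ0 VH EH =
     (\<Union>I\<in>{I. I \<subseteq> VH \<and> card I = card VQ}. copies VQ EQ0 I (induced_edges EH I))"
proof (intro equalityI subsetI)
  fix c assume c: "c \<in> copies VQ EQ0 VH EH"
  obtain V' E' where [simp]: "c = (V', E')"
    by fastforce
  have "card V' = card VQ"
    using c card_vertices_of_copy by simp
  moreover have "(V', E') \<in> copies VQ EQ0 V' (induced_edges EH V')"
    using c unfolding copies_def induced_edges_def by auto
  ultimately show "c \<in> (\<Union>I\<in>{I. I \<subseteq> VH \<and> card I = card VQ}. copies VQ EQ0 I (induced_edges EH I))"
    using c unfolding copies_def by auto
qed (auto simp: copies_def induced_edges_def)

lemma num_copies_eq_sum_induced:
  assumes "finite VH"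
  shows "num_copies VQ EQ0 VH EH =
           (\<Sum>I\<in>{I. I \<subseteq> VH \<and> card I = card VQ}. num_copies VQ EQ0 I (induced_edges EH I))"
proof -
  let ?\<I> = "{I. I \<subseteq> VH \<and> card I = card VQ}"
  have finite_I: "finite I" if "I \<in> ?\<I>" for I
    using that assms finite_subset by blast
  have vertices: "V' = I" if "I \<in> ?\<I>" "(V', E') \<in> copies VQ EQ0 I (induced_edges EH I)" for I V' E'
  proof (rule card_subset_eq)
    show "V' \<subseteq> I"
      using that(2) unfolding copies_def by auto
    show "card V' = card I"
      using that card_vertices_of_copy by auto
  qed (use that(1) finite_I in blast)
  have "card (copies VQ EQ0 VH EH) = (\<Sum>I\<in>?\<I>. card (copies VQ EQ0 I (induced_edges EH I)))"
    unfolding copies_eq_UN_copies_induced[of VQ EQ0 VH EH]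
  proof (rule card_UN_disjoint)
    show "finite ?\<I>"
      using assms by (simp add: finite_Collect_subsets)
    show "\<forall>I\<in>?\<I>. finite (copies VQ EQ0 I (induced_edges EH I))"
      using finite_I finite_copies by blast
    show "\<forall>I\<in>?\<I>. \<forall>J\<in>?\<I>. I \<noteq> J \<longrightarrow>
            copies VQ EQ0 I (induced_edges EH I) \<inter> copies VQ EQ0 J (induced_edges EH J) = {}"
      using vertices by (metis disjoint_iff prod.exhaust)
  qed
  then show ?thesis
    by (simp add: num_copies_eq_card_copies)
qed

lemma PQH_normalized_powr_le:
  fixes x :: "nat \<Rightarrow> real"
  assumes pos: "num_copies {0..<s} EQ0 {0..<n} EH > 0" and t: "1 \<le> t" and x: "\<And>i. 0 \<le> x i"
  shows "(PQH s EQ0 n EH x / (fact s * real (num_copies {0..<s} EQ0 {0..<n} EH))) powr t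
           \<le> PQH s EQ0 n EH (\<lambda>i. x i powr t) / (fact s * real (num_copies {0..<s} EQ0 {0..<n} EH))"
proof -
  let ?\<I> = "{I. I \<subseteq> {0..<n} \<and> card I = s}"
  define N where "N = real (num_copies {0..<s} EQ0 {0..<n} EH)"
  define w where "w I = real (num_copies {0..<s} EQ0 I (induced_edges EH I)) / N" for I
  have "N = (\<Sum>I\<in>?\<I>. real (num_copies {0..<s} EQ0 I (induced_edges EH I)))"
    unfolding N_def by (subst num_copies_eq_sum_induced) auto
  then have weights: "sum w ?\<I> = 1"
    using pos unfolding w_def N_def by (simp add: sum_divide_distrib[symmetric])
  have finite: "finite ?\<I>"
    by (simp add: finite_Collect_subsets)
  have "?\<I> \<noteq> {}"
    using weights by (metis sum.empty zero_neq_one)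
  have average: "PQH s EQ0 n EH y / (fact s * N) = (\<Sum>I\<in>?\<I>. w I * (\<Prod>i\<in>I. y i))" for y
    unfolding PQH_def w_def by (simp add: sum_divide_distrib)
  have "(PQH s EQ0 n EH x / (fact s * N)) powr t = (\<Sum>I\<in>?\<I>. w I *\<^sub>R (\<Prod>i\<in>I. x i)) powr t"
    by (simp add: average)
  also have "\<dots> \<le> (\<Sum>I\<in>?\<I>. w I * (\<Prod>i\<in>I. x i) powr t)"
    using finite \<open>?\<I> \<noteq> {}\<close> weights x
    by (intro convex_on_sum[OF _ _ convex_on_powr_nonneg[OF t]])
       (auto simp: w_def N_def prod_nonneg)
  also have "\<dots> = PQH s EQ0 n EH (\<lambda>i. x i powr t) / (fact s * N)"
    by (simp add: average prod_powr_distrib)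
  finally show ?thesis
    unfolding N_def .
qed

lemma pnorm_eq_1_iff:
  assumes "0 < p"
  shows "pnorm p n x = 1 \<longleftrightarrow> (\<Sum>i<n. \<bar>x i\<bar> powr p) = 1"
proof -
  define S where "S = (\<Sum>i<n. \<bar>x i\<bar> powr p)"
  have "S \<ge> 0"
    unfolding S_def by (intro sum_nonneg) auto
  have "S powr (1 / p) = 1 \<longleftrightarrow> S = 1"
  proof
    assume "S powr (1 / p) = 1"
    then have "(S powr (1 / p)) powr p = 1"
      by simp
    then show "S = 1"
      using \<open>S \<ge> 0\<close> assms by (simp add: powr_powr)
  qed simp
  then show ?thesis
    unfolding pnorm_def S_def .
qed

lemma abs_le_1_if_pnorm_eq_1:
  assumes "0 < p" "pnorm p n x = 1" "i < n"
  shows "\<bar>x i\<bar> \<le> 1"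
proof -
  have "\<bar>x i\<bar> powr p \<le> (\<Sum>i<n. \<bar>x i\<bar> powr p)"
    using assms(3) by (intro member_le_sum) auto
  then have "\<bar>x i\<bar> powr p \<le> 1"
    using assms(1,2) pnorm_eq_1_iff by simp
  then show ?thesis
    using assms(1) powr_less_mono2[of p 1 "\<bar>x i\<bar>"] by fastforce
qed

lemma pnorm_indicator_0:
  assumes "0 < p" "0 < n"
  shows "pnorm p n (indicator {0}) = 1"
proof -
  have "(\<Sum>i<n. \<bar>indicator {0} i :: real\<bar> powr p) = (\<Sum>i<n. if i = 0 then 1 else 0)"
    using assms by (intro sum.cong) (auto simp: indicator_def)
  also have "\<dots> = 1"
    using assms by simp
  finally show ?thesis
    using assms(1) pnorm_eq_1_iff by simp
qed

lemma pnorm_powr_rescale: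
  assumes "0 < p" "0 < q" "pnorm q n y = 1"
  shows "pnorm p n (\<lambda>i. \<bar>y i\<bar> powr (q / p)) = 1"
  using assms by (simp add: pnorm_eq_1_iff powr_powr)

lemma PQH_le_PQH_abs: "PQH s EQ0 n EH x \<le> PQH s EQ0 n EH (\<lambda>i. \<bar>x i\<bar>)"
  unfolding PQH_def
  by (intro mult_left_mono sum_mono) (auto simp: abs_prod[symmetric] intro!: mult_left_mono)

lemma PQH_nonneg: "(\<And>i. 0 \<le> x i) \<Longrightarrow> 0 \<le> PQH s EQ0 n EH x"
  unfolding PQH_def by (intro mult_nonneg_nonneg sum_nonneg prod_nonneg) auto

lemma PQH_le_if_pnorm_eq_1:
  assumes "0 < p" "pnorm p n x = 1"
  shows "PQH s EQ0 n EH x \<le> fact s * (\<Sum>I\<in>{I. I \<subseteq> {0..<n} \<and> card I = s}.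
           real (num_copies {0..<s} EQ0 I (induced_edges EH I)))"
  unfolding PQH_def
proof (intro mult_left_mono sum_mono)
  fix I assume "I \<in> {I. I \<subseteq> {0..<n} \<and> card I = s}"
  then have "\<bar>\<Prod>i\<in>I. x i\<bar> \<le> 1"
    using abs_le_1_if_pnorm_eq_1[OF assms] by (auto simp: abs_prod intro!: prod_le_1)
  then show "real (num_copies {0..<s} EQ0 I (induced_edges EH I)) * (\<Prod>i\<in>I. x i)
      \<le> real (num_copies {0..<s} EQ0 I (induced_edges EH I))"
    by (intro mult_left_le) (auto dest: abs_le_D1)
qed simp

lemma PQH_le_lambda_p:
  assumes "0 < p" "pnorm p n x = 1"
  shows "PQH s EQ0 n EH x \<le> lambda_p p s EQ0 n EH"
  unfolding lambda_p_def
proof (rule cSUP_upper)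
  show "bdd_above (PQH s EQ0 n EH ` {x. pnorm p n x = 1})"
    using PQH_le_if_pnorm_eq_1[OF assms(1)] by (intro bdd_aboveI2) auto
qed (use assms in simp)

lemma lambda_p_nonneg:
  assumes "0 < p" "0 < n"
  shows "0 \<le> lambda_p p s EQ0 n EH"
proof -
  have "0 \<le> PQH s EQ0 n EH (indicator {0})"
    by (rule PQH_nonneg) simp
  also have "\<dots> \<le> lambda_p p s EQ0 n EH"
    using assms by (intro PQH_le_lambda_p pnorm_indicator_0)
  finally show ?thesis .
qed

lemma PQH_le_normalized_lambda_p_powr:
  assumes pos: "num_copies {0..<s} EQ0 {0..<n} EH > 0" and "0 < n" "0 < p" "p \<le> q"
    and y: "pnorm q n y = 1"
  defines "C \<equiv> fact s * real (num_copies {0..<s} EQ0 {0..<n} EH)"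
  shows "PQH s EQ0 n EH y \<le> C * (lambda_p p s EQ0 n EH / C) powr (p / q)"
proof -
  define t where "t = q / p"
  define P where "P = PQH s EQ0 n EH (\<lambda>i. \<bar>y i\<bar>) / C"
  have t: "1 \<le> t" and "0 < q"
    using assms unfolding t_def by auto
  have "C > 0"
    using pos unfolding C_def by simp
  have "P \<ge> 0"
    unfolding P_def using \<open>C > 0\<close> by (simp add: PQH_nonneg)
  have "P powr t \<le> PQH s EQ0 n EH (\<lambda>i. \<bar>y i\<bar> powr t) / C"
    unfolding P_def C_def using pos t by (intro PQH_normalized_powr_le) auto
  also have "\<dots> \<le> lambda_p p s EQ0 n EH / C"
    unfolding t_def using \<open>C > 0\<close> y \<open>0 < p\<close> \<open>0 < q\<close>
    by (intro divide_right_mono PQH_le_lambda_p pnorm_powr_rescale) auto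
  finally have "(P powr t) powr (p / q) \<le> (lambda_p p s EQ0 n EH / C) powr (p / q)"
    using \<open>0 < p\<close> \<open>0 < q\<close> by (intro powr_mono2) auto
  then have "P \<le> (lambda_p p s EQ0 n EH / C) powr (p / q)"
    using \<open>P \<ge> 0\<close> \<open>0 < p\<close> \<open>0 < q\<close> by (simp add: powr_powr t_def)
  then show ?thesis
    using PQH_le_PQH_abs[of s EQ0 n EH y] \<open>C > 0\<close> unfolding P_def by (simp add: field_simps)
qed

lemma lambda_p_normalized_powr_le:
  assumes pos: "num_copies {0..<s} EQ0 {0..<n} EH > 0" and "0 < n" "0 < p" "p \<le> q"
  defines "C \<equiv> fact s * real (num_copies {0..<s} EQ0 {0..<n} EH)"
  shows "(lambda_p q s EQ0 n EH / C) powr (q / p) \<le> lambda_p p s EQ0 n EH / C"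
proof -
  define L where "L = lambda_p p s EQ0 n EH"
  have "0 < q" "C > 0"
    using assms unfolding C_def by auto
  have "lambda_p q s EQ0 n EH \<le> C * (L / C) powr (p / q)"
    unfolding lambda_p_def[of q] L_def C_def using assms pnorm_indicator_0[OF \<open>0 < q\<close> \<open>0 < n\<close>]
    by (intro cSUP_least PQH_le_normalized_lambda_p_powr) auto
  then have "(lambda_p q s EQ0 n EH / C) powr (q / p) \<le> ((L / C) powr (p / q)) powr (q / p)"
    using \<open>C > 0\<close> \<open>0 < p\<close> \<open>0 < q\<close> lambda_p_nonneg[OF \<open>0 < q\<close> \<open>0 < n\<close>]
    by (intro powr_mono2) (auto simp: field_simps)
  also have "\<dots> = L / C"
    using lambda_p_nonneg[OF \<open>0 < p\<close> \<open>0 < n\<close>] \<open>C > 0\<close> \<open>0 < p\<close> \<open>0 < q\<close>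
    by (simp add: powr_powr L_def)
  finally show ?thesis
    unfolding L_def .
qed

theorem lemma2p2:
  fixes r s n :: nat and EQ0 EH :: "nat set set"
  assumes "2 \<le> r" and "r \<le> s" and "s \<le> n"
    and "is_rgraph r {0..<s} EQ0" and "is_rgraph r {0..<n} EH"
    and "num_copies {0..<s} EQ0 {0..<n} EH > 0"
  shows "\<forall>p q :: real. 1 \<le> p \<longrightarrow> p \<le> q \<longrightarrow>
      (lambda_p q s EQ0 n EH / (fact s * real (num_copies {0..<s} EQ0 {0..<n} EH))) powr q
      \<le> (lambda_p p s EQ0 n EH / (fact s * real (num_copies {0..<s} EQ0 {0..<n} EH))) powr p"
proof (intro allI impI)
  fix p q :: real
  assume "1 \<le> p" "p \<le> q"
  define C where "C = fact s * real (num_copies {0..<s} EQ0 {0..<n} EH)"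
  have "0 < n" "0 < p" "0 < q"
    using assms(1-3) \<open>1 \<le> p\<close> \<open>p \<le> q\<close> by auto
  have "(lambda_p q s EQ0 n EH / C) powr q = ((lambda_p q s EQ0 n EH / C) powr (q / p)) powr p"
    using \<open>0 < p\<close> by (simp add: powr_powr)
  also have "\<dots> \<le> (lambda_p p s EQ0 n EH / C) powr p"
    using lambda_p_normalized_powr_le[OF assms(6) \<open>0 < n\<close> \<open>0 < p\<close> \<open>p \<le> q\<close>] \<open>0 < p\<close>
    unfolding C_def by (intro powr_mono2) auto
  finally show "(lambda_p q s EQ0 n EH / (fact s * real (num_copies {0..<s} EQ0 {0..<n} EH))) powr q
      \<le> (lambda_p p s EQ0 n EH / (fact s * real (num_copies {0..<s} EQ0 {0..<n} EH))) powr p"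
    unfolding C_def .
qed

end
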